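(* Let $n\ge 2$. Then $n$ is prime if and only if the only rank-$2$ matroid on the ground set $\mathbb{Z}_n$ whose set of bases is invariant under the translation action of $\mathbb{Z}_n$ is the uniform matroid $U_{2,n}$; equivalently, iff $\mathbb{B}[\mathbb{Z}_n]$ has exactly one two-dimensional tropical subrepresentation, the one corresponding to $U_{2,n}$.
   Context: $\mathbb{Z}_n$ acts on $\binom{\mathbb{Z}_n}{2}$ by $g\cdot\{a,b\}=\{g+a,g+b\}$. Two-dimensional tropical subrepresentations of the boolean regular representation $\mathbb{B}[\mathbb{Z}_n]$ are equivalent to rank-$2$ matroids on ground set $\mathbb{Z}_n$ with basis set invariant under this action. *)

theory Defs
  imports "HOL-Computational_Algebra.Primes"
begin

text \<open>Z_n is modelled by the carrier {0..<n} of natural numbers with addition mod n.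
A matroid on a ground set E is given by its family of bases (basis axioms).\<close>

definition matroid_bases :: "'a set \<Rightarrow> 'a set set \<Rightarrow> bool" where
  "matroid_bases E \<B> \<longleftrightarrow>
     \<B> \<noteq> {} \<and> (\<forall>B\<in>\<B>. B \<subseteq> E) \<and>
     (\<forall>B1\<in>\<B>. \<forall>B2\<in>\<B>. \<forall>x\<in>B1 - B2. \<exists>y\<in>B2 - B1. insert y (B1 - {x}) \<in> \<B>)"

definition rank2_matroid_bases :: "'a set \<Rightarrow> 'a set set \<Rightarrow> bool" where
  "rank2_matroid_bases E \<B> \<longleftrightarrow> matroid_bases E \<B> \<and> (\<forall>B\<in>\<B>. card B = 2)"

definition translate :: "nat \<Rightarrow> nat \<Rightarrow> nat set \<Rightarrow> nat set" where
  "translate n g B = (\<lambda>a. (g + a) mod n) ` B"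

definition translation_invariant :: "nat \<Rightarrow> nat set set \<Rightarrow> bool" where
  "translation_invariant n \<B> \<longleftrightarrow> (\<forall>g<n. \<forall>B\<in>\<B>. translate n g B \<in> \<B>)"

definition uniform_2 :: "nat \<Rightarrow> nat set set" where
  "uniform_2 n = {B. B \<subseteq> {0..<n} \<and> card B = 2}"

end

theory Submission
  imports Defs "HOL-Number_Theory.Cong"
begin

text \<open>If q is a proper divisor of n, calling two elements of Z_n parallel when they are
congruent mod q gives a translation-invariant rank-2 matroid other than U_{2,n}.
Conversely, for a translation-invariant rank-2 matroid, the offsets d for which {0, d} is not a
basis are closed under addition: non-basis pairs are transitive, and translating {0, d2} by d1
gives {d1, d1 + d2}. They do not exhaust Z_n, since translation puts 0 into some basis {0, e}.
If n is prime, any nonzero offset would generate Z_n, so the only offset is 0 and every pair is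
a basis.\<close>

lemma rank2_matroid_basesD:
  assumes "rank2_matroid_bases E \<B>"
  shows "\<B> \<noteq> {}" and "B \<in> \<B> \<Longrightarrow> B \<subseteq> E" and "B \<in> \<B> \<Longrightarrow> card B = 2"
    and "B1 \<in> \<B> \<Longrightarrow> B2 \<in> \<B> \<Longrightarrow> x \<in> B1 - B2 \<Longrightarrow> \<exists>y\<in>B2 - B1. insert y (B1 - {x}) \<in> \<B>"
  using assms unfolding rank2_matroid_bases_def matroid_bases_def by blast+

definition separated_pairs :: "('a \<Rightarrow> 'b) \<Rightarrow> 'a set \<Rightarrow> 'a set set" where
  "separated_pairs f E = {B. B \<subseteq> E \<and> card B = 2 \<and> inj_on f B}"

lemma rank2_matroid_bases_separated_pairs:
  assumes "a \<in> E" "b \<in> E" "f a \<noteq> f b"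
  shows "rank2_matroid_bases E (separated_pairs f E)"
proof -
  have "a \<noteq> b"
    using assms(3) by blast
  then have "{a, b} \<in> separated_pairs f E"
    using assms by (auto simp: separated_pairs_def)
  moreover have "\<exists>y\<in>B2 - B1. insert y (B1 - {x}) \<in> separated_pairs f E"
    if B1: "B1 \<in> separated_pairs f E" and B2: "B2 \<in> separated_pairs f E" and x: "x \<in> B1 - B2"
    for B1 B2 x
  proof -
    obtain z where z: "B1 = {x, z}" "z \<noteq> x"
      using B1 x by (auto simp: separated_pairs_def card_2_iff)
    have "card (f ` B2) = 2"
      using B2 by (simp add: separated_pairs_def card_image)
    then obtain y where y: "y \<in> B2" "f y \<noteq> f z"
      by (metis card_2_iff imageE insertCI)
    have "y \<noteq> z"
      using y(2) by blast
    show ?thesis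
    proof
      show "y \<in> B2 - B1"
        using x y z by auto
      have "{y, z} \<in> separated_pairs f E"
        using B1 B2 y z \<open>y \<noteq> z\<close> by (auto simp: separated_pairs_def)
      then show "insert y (B1 - {x}) \<in> separated_pairs f E"
        using z by (simp add: insert_commute)
    qed
  qed
  moreover have "B \<subseteq> E" "card B = 2" if "B \<in> separated_pairs f E" for B
    using that by (simp_all add: separated_pairs_def)
  ultimately show ?thesis
    unfolding rank2_matroid_bases_def matroid_bases_def by blast
qed

lemma uniform_2_eq_separated_pairs: "uniform_2 n = separated_pairs (\<lambda>a. a mod n) {0..<n}"
proof -
  have "inj_on (\<lambda>a. a mod n) B" if "B \<subseteq> {0..<n}" for B
    using that by (auto simp: inj_on_def subset_iff)
  then show ?thesis
    unfolding uniform_2_def separated_pairs_def by blast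
qed

lemma translate_pair: "translate n g {a, b} = {(g + a) mod n, (g + b) mod n}"
  by (simp add: translate_def)

lemma translate_translate: "translate n g (translate n h B) = translate n ((g + h) mod n) B"
  unfolding translate_def image_image by (metis add.assoc mod_add_left_eq mod_add_right_eq)

lemma translate_inverse:
  assumes "B \<subseteq> {0..<n}" "g \<le> n"
  shows "translate n ((n - g) mod n) (translate n g B) = B"
proof -
  have "((n - g) mod n + g) mod n = 0"
    using assms(2) by (simp add: mod_add_left_eq)
  then have "translate n ((n - g) mod n) (translate n g B) = translate n 0 B"
    by (simp add: translate_translate)
  also have "\<dots> = B"
    using assms(1) by (force simp: translate_def image_iff)
  finally show ?thesis .
qed

lemma translate_mem_iff:
  assumes "translation_invariant n \<B>" "B \<subseteq> {0..<n}" "g < n"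
  shows "translate n g B \<in> \<B> \<longleftrightarrow> B \<in> \<B>"
proof
  assume "translate n g B \<in> \<B>"
  then have "translate n ((n - g) mod n) (translate n g B) \<in> \<B>"
    using assms(1,3) unfolding translation_invariant_def by simp
  then show "B \<in> \<B>"
    using translate_inverse assms(2,3) by simp
qed (use assms in \<open>simp add: translation_invariant_def\<close>)

lemma translate_mod_dvd_eq_iff:
  fixes p n :: nat
  assumes "p dvd n"
  shows "((g + a) mod n) mod p = ((g + b) mod n) mod p \<longleftrightarrow> a mod p = b mod p"
  using assms cong_add_lcancel_nat[of g a b p] by (simp add: mod_mod_cancel cong_def)

lemma translation_invariant_separated_residues:
  assumes "p dvd n"
  shows "translation_invariant n (separated_pairs (\<lambda>a. a mod p) {0..<n})"
  unfolding translation_invariant_def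
proof (intro allI impI ballI)
  fix g B
  assume g: "g < n" and B: "B \<in> separated_pairs (\<lambda>a. a mod p) {0..<n}"
  have inj_mod: "inj_on ((\<lambda>a. a mod p) \<circ> (\<lambda>a. (g + a) mod n)) B"
    using B translate_mod_dvd_eq_iff[OF assms] by (simp add: separated_pairs_def inj_on_def)
  then have "inj_on (\<lambda>a. (g + a) mod n) B"
    by (rule inj_on_imageI2)
  then have "card (translate n g B) = 2"
    using B by (simp add: translate_def separated_pairs_def card_image)
  moreover have "inj_on (\<lambda>a. a mod p) (translate n g B)"
    using inj_mod by (simp add: translate_def inj_on_imageI)
  moreover have "translate n g B \<subseteq> {0..<n}"
    using g by (auto simp: translate_def)
  ultimately show "translate n g B \<in> separated_pairs (\<lambda>a. a mod p) {0..<n}"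
    by (simp add: separated_pairs_def)
qed

lemma translation_invariant_rank2_separated_residues:
  assumes "p dvd n" "2 \<le> p" "0 < n"
  shows "rank2_matroid_bases {0..<n} (separated_pairs (\<lambda>a. a mod p) {0..<n})
    \<and> translation_invariant n (separated_pairs (\<lambda>a. a mod p) {0..<n})"
proof
  have "1 < n"
    using dvd_imp_le[OF assms(1,3)] assms(2) by simp
  then show "rank2_matroid_bases {0..<n} (separated_pairs (\<lambda>a. a mod p) {0..<n})"
    using rank2_matroid_bases_separated_pairs[of 0 "{0..<n}" 1 "\<lambda>a. a mod p"] assms(2) by simp
qed (rule translation_invariant_separated_residues[OF assms(1)])

lemma rank2_non_basis_trans:
  assumes "rank2_matroid_bases E \<B>" "{b, e} \<in> \<B>" "{a, b} \<notin> \<B>" "{b, c} \<notin> \<B>"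
  shows "{a, c} \<notin> \<B>"
proof
  assume ac: "{a, c} \<in> \<B>"
  have "b \<noteq> e"
    using rank2_matroid_basesD(3)[OF assms(1,2)] by auto
  moreover have "e \<noteq> a"
    using assms(2,3) by (metis insert_commute)
  moreover have "e \<noteq> c"
    using assms(2,4) by blast
  ultimately have "e \<in> {b, e} - {a, c}"
    by blast
  then obtain y where y: "y \<in> {a, c}" "insert y ({b, e} - {e}) \<in> \<B>"
    using rank2_matroid_basesD(4)[OF assms(1,2) ac] by blast
  moreover have "insert y ({b, e} - {e}) = {b, y}"
    using \<open>b \<noteq> e\<close> by auto
  ultimately have "{b, y} \<in> \<B>"
    by simp
  moreover have "{b, a} = {a, b}"
    by auto
  ultimately show False
    using y(1) assms(3,4) by auto
qed

lemma translation_invariant_rank2_covers: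
  assumes "rank2_matroid_bases {0..<n} \<B>" "translation_invariant n \<B>" "b < n"
  shows "\<exists>e. {b, e} \<in> \<B>"
proof -
  obtain B0 where "B0 \<in> \<B>" "B0 \<subseteq> {0..<n}" "card B0 = 2"
    using rank2_matroid_basesD[OF assms(1)] by blast
  then obtain x y where xy: "{x, y} \<in> \<B>" "x < n"
    by (auto simp: card_2_iff)
  define g where "g = (b + (n - x)) mod n"
  have "(g + x) mod n = (b + n) mod n"
    using xy(2) by (simp add: g_def mod_add_left_eq)
  then have "translate n g {x, y} = {b, (g + y) mod n}"
    using assms(3) by (simp add: translate_pair)
  moreover have "g < n"
    using assms(3) by (simp add: g_def)
  moreover have "translate n g {x, y} \<in> \<B>"
    using assms(2) \<open>g < n\<close> xy(1) unfolding translation_invariant_def by blast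
  ultimately show ?thesis by auto
qed

text \<open>The offset 0 is included only to make this a submonoid of Z_n.\<close>

definition non_basis_offsets :: "nat \<Rightarrow> nat set set \<Rightarrow> nat set" where
  "non_basis_offsets n \<B> = {d. d < n \<and> (d = 0 \<or> {0, d} \<notin> \<B>)}"

context
  fixes n :: nat and \<B> :: "nat set set"
  assumes rank2: "rank2_matroid_bases {0..<n} \<B>"
    and invariant: "translation_invariant n \<B>"
begin

lemma non_basis_offsets_add_closed:
  assumes d1: "d1 \<in> non_basis_offsets n \<B>" and d2: "d2 \<in> non_basis_offsets n \<B>"
  shows "(d1 + d2) mod n \<in> non_basis_offsets n \<B>"
proof (cases "d1 = 0 \<or> d2 = 0 \<or> (d1 + d2) mod n = 0")
  case True
  with d1 d2 show ?thesis by (auto simp: non_basis_offsets_def)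
next
  case False
  have "d1 < n" "{0, d1} \<notin> \<B>" "{0, d2} \<notin> \<B>"
    using d1 d2 False by (auto simp: non_basis_offsets_def)
  moreover have "translate n d1 {0, d2} = {d1, (d1 + d2) mod n}"
    using \<open>d1 < n\<close> d2 by (simp add: translate_pair non_basis_offsets_def)
  ultimately have "{d1, (d1 + d2) mod n} \<notin> \<B>"
    using translate_mem_iff[OF invariant, of "{0, d2}" d1] d2
    by (simp add: non_basis_offsets_def)
  moreover obtain e where "{d1, e} \<in> \<B>"
    using translation_invariant_rank2_covers[OF rank2 invariant \<open>d1 < n\<close>] by blast
  ultimately have "{0, (d1 + d2) mod n} \<notin> \<B>"
    using rank2_non_basis_trans[OF rank2] \<open>{0, d1} \<notin> \<B>\<close> by blast
  then show ?thesis
    using \<open>d1 < n\<close> by (simp add: non_basis_offsets_def)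
qed

lemma non_basis_offsets_mult_closed:
  assumes "d \<in> non_basis_offsets n \<B>" "0 < n"
  shows "(k * d) mod n \<in> non_basis_offsets n \<B>"
proof (induction k)
  case 0
  then show ?case using assms(2) by (simp add: non_basis_offsets_def)
next
  case (Suc k)
  have "(d + (k * d) mod n) mod n \<in> non_basis_offsets n \<B>"
    using non_basis_offsets_add_closed[OF assms(1) Suc.IH] .
  then show ?case
    by (simp add: mod_add_right_eq)
qed

lemma non_basis_offsets_prime_eq_0:
  assumes "prime n" "d \<in> non_basis_offsets n \<B>"
  shows "d = 0"
proof (rule ccontr)
  assume "d \<noteq> 0"
  have "n \<ge> 2"
    using assms(1) by (simp add: prime_ge_2_nat)
  obtain e where e: "{0, e} \<in> \<B>"
    using translation_invariant_rank2_covers[OF rank2 invariant] \<open>n \<ge> 2\<close> by fastforce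
  have "e < n"
    using rank2_matroid_basesD(2)[OF rank2 e] by simp
  have "e \<noteq> 0"
    using rank2_matroid_basesD(3)[OF rank2 e] by (cases "e = 0") simp_all
  have "d < n"
    using assms(2) by (simp add: non_basis_offsets_def)
  with \<open>d \<noteq> 0\<close> have "\<not> n dvd d"
    by (auto dest: dvd_imp_le)
  then have "gcd d n = 1"
    using assms(1) prime_imp_coprime by (metis coprime_commute coprime_iff_gcd_eq_1)
  then obtain x where "[d * x = e] (mod n)"
    using cong_solve_dvd_nat[of d n e] by auto
  then have "(x * d) mod n = e"
    using \<open>e < n\<close> by (simp add: cong_def mult.commute)
  then have "e \<in> non_basis_offsets n \<B>"
    using non_basis_offsets_mult_closed[OF assms(2), of "x"] \<open>n \<ge> 2\<close> by simp
  with e \<open>e \<noteq> 0\<close> show False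
    by (simp add: non_basis_offsets_def)
qed

lemma prime_translation_invariant_rank2_eq_uniform_2:
  assumes "prime n"
  shows "\<B> = uniform_2 n"
proof
  show "\<B> \<subseteq> uniform_2 n"
    using rank2_matroid_basesD(2,3)[OF rank2] by (auto simp: uniform_2_def)
next
  show "uniform_2 n \<subseteq> \<B>"
  proof
    fix B
    assume B: "B \<in> uniform_2 n"
    then obtain a b where ab: "B = {a, b}" "a \<noteq> b" "a < n" "b < n"
      by (auto simp: uniform_2_def card_2_iff)
    define g where "g = (n - a) mod n"
    have "g < n"
      using ab(3) by (simp add: g_def)
    have "(g + a) mod n = 0"
      using ab(3) by (simp add: g_def mod_add_left_eq)
    moreover have "(g + a) mod n \<noteq> (g + b) mod n"
      using translate_mod_dvd_eq_iff[of n n g a b] ab by simp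
    ultimately have "(g + b) mod n \<notin> non_basis_offsets n \<B>"
      using non_basis_offsets_prime_eq_0[OF assms] by metis
    then have "{0, (g + b) mod n} \<in> \<B>"
      using \<open>g < n\<close> by (simp add: non_basis_offsets_def)
    moreover have "translate n g B = {0, (g + b) mod n}"
      using ab(1) \<open>(g + a) mod n = 0\<close> by (simp add: translate_pair)
    ultimately have "translate n g B \<in> \<B>"
      by simp
    then show "B \<in> \<B>"
      using translate_mem_iff[OF invariant _ \<open>g < n\<close>] B by (simp add: uniform_2_def)
  qed
qed

end

theorem mainTheorem6:
  fixes n :: nat
  assumes "n \<ge> 2"
  shows "prime n \<longleftrightarrow>
    {\<B>. rank2_matroid_bases {0..<n} \<B> \<and> translation_invariant n \<B>} = {uniform_2 n}"
proof
  assume "prime n"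
  then show "{\<B>. rank2_matroid_bases {0..<n} \<B> \<and> translation_invariant n \<B>} = {uniform_2 n}"
    using translation_invariant_rank2_separated_residues[of n n] assms
      prime_translation_invariant_rank2_eq_uniform_2
    by (auto simp: uniform_2_eq_separated_pairs)
next
  assume unique: "{\<B>. rank2_matroid_bases {0..<n} \<B> \<and> translation_invariant n \<B>} = {uniform_2 n}"
  show "prime n"
  proof (rule ccontr)
    assume "\<not> prime n"
    then obtain q where q: "q dvd n" "2 \<le> q" "q < n"
      using assms by (auto simp: prime_nat_iff')
    then have "separated_pairs (\<lambda>a. a mod q) {0..<n} = uniform_2 n"
      using translation_invariant_rank2_separated_residues[of q n] unique by auto
    moreover have "{0, q} \<in> uniform_2 n" "{0, q} \<notin> separated_pairs (\<lambda>a. a mod q) {0..<n}"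
      using q by (auto simp: uniform_2_def separated_pairs_def)
    ultimately show False
      by simp
  qed
qed

end
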